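(* Let $\mathbb{E}$ be a finitely complete category, $\Sigma$ a fibrational class of split epimorphisms in $\mathbb{E}$, and suppose $\mathbb{E}$ is a $\Sigma$-Mal'tsev category. Then every $\Sigma$-relation $S$ on an object $X$ is transitive, and every symmetric $\Sigma$-relation on $X$ is an equivalence relation.
   Context: A split epimorphism is a pair $(f,s)$ with $f\colon X\to Y$, $s\colon Y\to X$, $fs=1_Y$ (the splitting is part of the data). A class $\Sigma$ of split epimorphisms is fibrational if it contains every split epimorphism $(f,s)$ with $f$ an isomorphism and is stable under pullback: if $(f,s)\colon X\rightleftarrows Y$ is in $\Sigma$ and $g\colon Y'\to Y$ is any morphism, the pulled-back split epimorphism $(f',s')\colon Y'\times_Y X\rightleftarrows Y'$, $s'=(1_{Y'},sg)$, is in $\Sigma$. A pair of morphisms with common codomain $Z$ is jointly extremally epic if it does not factor jointly through any monomorphism into $Z$ which is not an isomorphism. $\mathbb{E}$ is a $\Sigma$-Mal'tsev category if for every split epimorphism $(f,s)\colon X\rightleftarrows Y$ in $\Sigma$ and every split epimorphism $(g,t)$ with $g\colon Y'\to Y$, $gt=1_Y$, letting $X'=Y'\times_Y X$ be the pullback of $f$ along $g$, $s'=(1_{Y'},sg)\colon Y'\to X'$ and $\bar t=(tf,1_X)\colon X\to X'$, the pair $(s',\bar t)$ is jointly extremally epic. A $\Sigma$-relation on $X$ is a reflexive relation $(d_0,d_1)\colon S\rightarrowtail X\times X$ with reflexivity map $s_0\colon X\to S$ such that the split epimorphism $(d_0,s_0)$ belongs to $\Sigma$. *)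

theory Defs
  imports Main
begin

text \<open>Categories given by a set of objects, a set of arrows, domain, codomain,
identities and (partial) composition. ccomp C g f denotes g after f.\<close>

record ('o, 'a) category =
  Ob :: "'o set"
  Ar :: "'a set"
  cdom :: "'a \<Rightarrow> 'o"
  ccod :: "'a \<Rightarrow> 'o"
  cid :: "'o \<Rightarrow> 'a"
  ccomp :: "'a \<Rightarrow> 'a \<Rightarrow> 'a"

definition is_category :: "('o, 'a) category \<Rightarrow> bool" where
  "is_category C \<longleftrightarrow>
     (\<forall>f\<in>Ar C. cdom C f \<in> Ob C \<and> ccod C f \<in> Ob C) \<and>
     (\<forall>X\<in>Ob C. cid C X \<in> Ar C \<and> cdom C (cid C X) = X \<and> ccod C (cid C X) = X) \<and>
     (\<forall>f\<in>Ar C. \<forall>g\<in>Ar C. ccod C f = cdom C g \<longrightarrow>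
        ccomp C g f \<in> Ar C \<and> cdom C (ccomp C g f) = cdom C f \<and> ccod C (ccomp C g f) = ccod C g) \<and>
     (\<forall>f\<in>Ar C. ccomp C (cid C (ccod C f)) f = f \<and> ccomp C f (cid C (cdom C f)) = f) \<and>
     (\<forall>f\<in>Ar C. \<forall>g\<in>Ar C. \<forall>h\<in>Ar C. ccod C f = cdom C g \<and> ccod C g = cdom C h \<longrightarrow>
        ccomp C h (ccomp C g f) = ccomp C (ccomp C h g) f)"

definition hom :: "('o, 'a) category \<Rightarrow> 'a \<Rightarrow> 'o \<Rightarrow> 'o \<Rightarrow> bool" where
  "hom C f X Y \<longleftrightarrow> f \<in> Ar C \<and> cdom C f = X \<and> ccod C f = Y"

definition is_mono :: "('o, 'a) category \<Rightarrow> 'a \<Rightarrow> bool" where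
  "is_mono C m \<longleftrightarrow> m \<in> Ar C \<and>
     (\<forall>g h. g \<in> Ar C \<and> h \<in> Ar C \<and> ccod C g = cdom C m \<and> ccod C h = cdom C m \<and>
        cdom C g = cdom C h \<and> ccomp C m g = ccomp C m h \<longrightarrow> g = h)"

definition is_iso :: "('o, 'a) category \<Rightarrow> 'a \<Rightarrow> bool" where
  "is_iso C f \<longleftrightarrow> f \<in> Ar C \<and>
     (\<exists>g. hom C g (ccod C f) (cdom C f) \<and> ccomp C g f = cid C (cdom C f) \<and>
          ccomp C f g = cid C (ccod C f))"

definition is_terminal :: "('o, 'a) category \<Rightarrow> 'o \<Rightarrow> bool" where
  "is_terminal C T \<longleftrightarrow> T \<in> Ob C \<and> (\<forall>X\<in>Ob C. \<exists>!t. hom C t X T)"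

definition is_pullback :: "('o, 'a) category \<Rightarrow> 'a \<Rightarrow> 'a \<Rightarrow> 'o \<Rightarrow> 'a \<Rightarrow> 'a \<Rightarrow> bool" where
  "is_pullback C f g P p q \<longleftrightarrow>
     f \<in> Ar C \<and> g \<in> Ar C \<and> ccod C f = ccod C g \<and>
     hom C p P (cdom C f) \<and> hom C q P (cdom C g) \<and> ccomp C f p = ccomp C g q \<and>
     (\<forall>W a b. hom C a W (cdom C f) \<and> hom C b W (cdom C g) \<and> ccomp C f a = ccomp C g b \<longrightarrow>
        (\<exists>!u. hom C u W P \<and> ccomp C p u = a \<and> ccomp C q u = b))"

definition is_product :: "('o, 'a) category \<Rightarrow> 'o \<Rightarrow> 'o \<Rightarrow> 'o \<Rightarrow> 'a \<Rightarrow> 'a \<Rightarrow> bool" where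
  "is_product C X Y P p1 p2 \<longleftrightarrow>
     hom C p1 P X \<and> hom C p2 P Y \<and>
     (\<forall>W a b. hom C a W X \<and> hom C b W Y \<longrightarrow>
        (\<exists>!u. hom C u W P \<and> ccomp C p1 u = a \<and> ccomp C p2 u = b))"

definition finitely_complete :: "('o, 'a) category \<Rightarrow> bool" where
  "finitely_complete C \<longleftrightarrow> is_category C \<and> (\<exists>T. is_terminal C T) \<and>
     (\<forall>f g. f \<in> Ar C \<and> g \<in> Ar C \<and> ccod C f = ccod C g \<longrightarrow>
        (\<exists>P p q. is_pullback C f g P p q))"

definition split_epi :: "('o, 'a) category \<Rightarrow> 'a \<Rightarrow> 'a \<Rightarrow> bool" where
  "split_epi C f s \<longleftrightarrow> f \<in> Ar C \<and> hom C s (ccod C f) (cdom C f) \<and>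
     ccomp C f s = cid C (ccod C f)"

definition fibrational :: "('o, 'a) category \<Rightarrow> ('a \<times> 'a) set \<Rightarrow> bool" where
  "fibrational C \<Sigma> \<longleftrightarrow>
     (\<forall>(f, s) \<in> \<Sigma>. split_epi C f s) \<and>
     (\<forall>f s. split_epi C f s \<and> is_iso C f \<longrightarrow> (f, s) \<in> \<Sigma>) \<and>
     (\<forall>f s g X' g' f' s'. (f, s) \<in> \<Sigma> \<and> g \<in> Ar C \<and> ccod C g = ccod C f \<and>
        is_pullback C f g X' g' f' \<and> hom C s' (cdom C g) X' \<and>
        ccomp C f' s' = cid C (cdom C g) \<and> ccomp C g' s' = ccomp C s g \<longrightarrow> (f', s') \<in> \<Sigma>)"

definition jointly_extremally_epic :: "('o, 'a) category \<Rightarrow> 'a \<Rightarrow> 'a \<Rightarrow> bool" where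
  "jointly_extremally_epic C a b \<longleftrightarrow> a \<in> Ar C \<and> b \<in> Ar C \<and> ccod C a = ccod C b \<and>
     (\<forall>m a' b'. is_mono C m \<and> ccod C m = ccod C a \<and>
        hom C a' (cdom C a) (cdom C m) \<and> hom C b' (cdom C b) (cdom C m) \<and>
        ccomp C m a' = a \<and> ccomp C m b' = b \<longrightarrow> is_iso C m)"

text \<open>Sigma-Mal'tsev: for (f,s) in Sigma, split epi (g,t) with cod g = cod f,
pullback X' of f along g with projections g' : X' \<rightarrow> X, f' : X' \<rightarrow> Y',
s' = (1_{Y'}, s g), tbar = (t f, 1_X), the pair (s', tbar) is jointly extremally epic.\<close>
definition sigma_maltsev :: "('o, 'a) category \<Rightarrow> ('a \<times> 'a) set \<Rightarrow> bool" where
  "sigma_maltsev C \<Sigma> \<longleftrightarrow>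
     (\<forall>f s g t X' g' f' s' tbar. (f, s) \<in> \<Sigma> \<and> split_epi C g t \<and> ccod C g = ccod C f \<and>
        is_pullback C f g X' g' f' \<and>
        hom C s' (cdom C g) X' \<and> ccomp C f' s' = cid C (cdom C g) \<and> ccomp C g' s' = ccomp C s g \<and>
        hom C tbar (cdom C f) X' \<and> ccomp C f' tbar = ccomp C t f \<and> ccomp C g' tbar = cid C (cdom C f)
        \<longrightarrow> jointly_extremally_epic C s' tbar)"

definition is_relation :: "('o, 'a) category \<Rightarrow> 'o \<Rightarrow> 'o \<Rightarrow> 'a \<Rightarrow> 'a \<Rightarrow> bool" where
  "is_relation C X S d0 d1 \<longleftrightarrow> hom C d0 S X \<and> hom C d1 S X \<and>
     (\<exists>P p1 p2 m. is_product C X X P p1 p2 \<and> is_mono C m \<and> hom C m S P \<and>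
        ccomp C p1 m = d0 \<and> ccomp C p2 m = d1)"

definition reflexive_relation :: "('o, 'a) category \<Rightarrow> 'o \<Rightarrow> 'o \<Rightarrow> 'a \<Rightarrow> 'a \<Rightarrow> 'a \<Rightarrow> bool" where
  "reflexive_relation C X S d0 d1 s0 \<longleftrightarrow> is_relation C X S d0 d1 \<and> hom C s0 X S \<and>
     ccomp C d0 s0 = cid C X \<and> ccomp C d1 s0 = cid C X"

definition sigma_relation :: "('o, 'a) category \<Rightarrow> ('a \<times> 'a) set \<Rightarrow> 'o \<Rightarrow> 'o \<Rightarrow> 'a \<Rightarrow> 'a \<Rightarrow> 'a \<Rightarrow> bool" where
  "sigma_relation C \<Sigma> X S d0 d1 s0 \<longleftrightarrow> reflexive_relation C X S d0 d1 s0 \<and> (d0, s0) \<in> \<Sigma>"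

definition symmetric_relation :: "('o, 'a) category \<Rightarrow> 'o \<Rightarrow> 'o \<Rightarrow> 'a \<Rightarrow> 'a \<Rightarrow> bool" where
  "symmetric_relation C X S d0 d1 \<longleftrightarrow> is_relation C X S d0 d1 \<and>
     (\<exists>\<sigma>. hom C \<sigma> S S \<and> ccomp C d0 \<sigma> = d1 \<and> ccomp C d1 \<sigma> = d0)"

text \<open>Transitive: for the pullback T of d1 and d0 (pairs xSy, ySz), the map
(d0 q0, d1 q1) : T \<rightarrow> X \<times> X factors through S.\<close>
definition transitive_relation :: "('o, 'a) category \<Rightarrow> 'o \<Rightarrow> 'o \<Rightarrow> 'a \<Rightarrow> 'a \<Rightarrow> bool" where
  "transitive_relation C X S d0 d1 \<longleftrightarrow> is_relation C X S d0 d1 \<and>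
     (\<forall>T q0 q1. is_pullback C d1 d0 T q0 q1 \<longrightarrow>
        (\<exists>t. hom C t T S \<and> ccomp C d0 t = ccomp C d0 q0 \<and> ccomp C d1 t = ccomp C d1 q1))"

definition equivalence_relation :: "('o, 'a) category \<Rightarrow> 'o \<Rightarrow> 'o \<Rightarrow> 'a \<Rightarrow> 'a \<Rightarrow> bool" where
  "equivalence_relation C X S d0 d1 \<longleftrightarrow>
     (\<exists>s0. reflexive_relation C X S d0 d1 s0) \<and> symmetric_relation C X S d0 d1 \<and>
     transitive_relation C X S d0 d1"

end

theory Submission
  imports Defs
begin

text \<open>Let \<open>T\<close> be the object of composable pairs \<open>(xSy, ySz)\<close>, the pullback of \<open>d\<^sub>1\<close> along
\<open>d\<^sub>0\<close>. Reflexivity gives two sections of \<open>T\<close>, \<open>u = (1, s\<^sub>0 d\<^sub>1)\<close> and \<open>v = (s\<^sub>0 d\<^sub>0, 1)\<close>,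
and since \<open>(d\<^sub>0, s\<^sub>0)\<close> lies in \<open>\<Sigma>\<close>, the \<open>\<Sigma>\<close>-Mal'tsev condition makes \<open>(u, v)\<close> jointly
extremally epic. The map \<open>(d\<^sub>0 q\<^sub>0, d\<^sub>1 q\<^sub>1) : T \<rightarrow> X \<times> X\<close> restricted along \<open>u\<close> and along \<open>v\<close>
is the inclusion of \<open>S\<close>; pulling back the monomorphism \<open>S \<rightarrowtail> X \<times> X\<close> along it gives a
monomorphism into \<open>T\<close> through which both \<open>u\<close> and \<open>v\<close> factor, hence an isomorphism, and so
the map factors through \<open>S\<close>.\<close>

lemma hom_objects: "is_category C \<Longrightarrow> hom C f X Y \<Longrightarrow> X \<in> Ob C \<and> Y \<in> Ob C"
  unfolding is_category_def hom_def by blast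

lemma hom_comp:
  "is_category C \<Longrightarrow> hom C f X Y \<Longrightarrow> hom C g Y Z \<Longrightarrow> hom C (ccomp C g f) X Z"
  unfolding is_category_def hom_def by metis

lemma comp_assoc:
  "is_category C \<Longrightarrow> hom C f X Y \<Longrightarrow> hom C g Y Z \<Longrightarrow> hom C h Z W \<Longrightarrow>
   ccomp C h (ccomp C g f) = ccomp C (ccomp C h g) f"
  unfolding is_category_def hom_def by metis

lemma comp_id_left: "is_category C \<Longrightarrow> hom C f X Y \<Longrightarrow> ccomp C (cid C Y) f = f"
  unfolding is_category_def hom_def by metis

lemma comp_id_right: "is_category C \<Longrightarrow> hom C f X Y \<Longrightarrow> ccomp C f (cid C X) = f"
  unfolding is_category_def hom_def by metis

lemma hom_id: "is_category C \<Longrightarrow> X \<in> Ob C \<Longrightarrow> hom C (cid C X) X X"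
  unfolding is_category_def hom_def by metis

lemma mono_cancel:
  "is_mono C m \<Longrightarrow> hom C m M N \<Longrightarrow> hom C g W M \<Longrightarrow> hom C k W M \<Longrightarrow>
   ccomp C m g = ccomp C m k \<Longrightarrow> g = k"
  unfolding is_mono_def hom_def by (elim conjE allE[of _ g] allE[of _ k] impE) auto

lemma is_pullback_sym: "is_pullback C f g P p q \<Longrightarrow> is_pullback C g f P q p"
  unfolding is_pullback_def by metis

lemma pullback_square:
  "is_pullback C f g P p q \<Longrightarrow>
   hom C p P (cdom C f) \<and> hom C q P (cdom C g) \<and> ccomp C f p = ccomp C g q"
  unfolding is_pullback_def by blast

lemma pullback_exists:
  "finitely_complete C \<Longrightarrow> hom C f X Z \<Longrightarrow> hom C g Y Z \<Longrightarrow> \<exists>P p q. is_pullback C f g P p q"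
  unfolding finitely_complete_def hom_def by metis

lemma pullback_pair_exists:
  "is_pullback C f g P p q \<Longrightarrow> hom C a W (cdom C f) \<Longrightarrow> hom C b W (cdom C g) \<Longrightarrow>
   ccomp C f a = ccomp C g b \<Longrightarrow> \<exists>u. hom C u W P \<and> ccomp C p u = a \<and> ccomp C q u = b"
  unfolding is_pullback_def by blast

lemma pullback_pair_unique:
  "is_pullback C f g P p q \<Longrightarrow> hom C a W (cdom C f) \<Longrightarrow> hom C b W (cdom C g) \<Longrightarrow>
   ccomp C f a = ccomp C g b \<Longrightarrow>
   hom C u W P \<Longrightarrow> ccomp C p u = a \<Longrightarrow> ccomp C q u = b \<Longrightarrow>
   hom C u' W P \<Longrightarrow> ccomp C p u' = a \<Longrightarrow> ccomp C q u' = b \<Longrightarrow> u = u'"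
  unfolding is_pullback_def by blast

lemma product_pair_exists:
  "is_product C X Y P p1 p2 \<Longrightarrow> hom C a W X \<Longrightarrow> hom C b W Y \<Longrightarrow>
   \<exists>u. hom C u W P \<and> ccomp C p1 u = a \<and> ccomp C p2 u = b"
  unfolding is_product_def by blast

lemma product_pair_unique:
  "is_product C X Y P p1 p2 \<Longrightarrow> hom C a W X \<Longrightarrow> hom C b W Y \<Longrightarrow>
   hom C u W P \<Longrightarrow> ccomp C p1 u = a \<Longrightarrow> ccomp C p2 u = b \<Longrightarrow>
   hom C u' W P \<Longrightarrow> ccomp C p1 u' = a \<Longrightarrow> ccomp C p2 u' = b \<Longrightarrow> u = u'"
  unfolding is_product_def by blast

lemma is_mono_pullback:
  assumes cat: "is_category C" and mono: "is_mono C m" and mh: "hom C m S P" and hh: "hom C h T P"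
    and pb: "is_pullback C m h R r0 r1"
  shows "is_mono C r1"
proof -
  have r0h: "hom C r0 R S" and r1h: "hom C r1 R T" and sq: "ccomp C m r0 = ccomp C h r1"
    using pullback_square[OF pb] mh hh unfolding hom_def by auto
  show ?thesis
    unfolding is_mono_def
  proof (intro conjI allI impI)
    show "r1 \<in> Ar C" using r1h unfolding hom_def by simp
    fix g k
    assume "g \<in> Ar C \<and> k \<in> Ar C \<and> ccod C g = cdom C r1 \<and> ccod C k = cdom C r1 \<and>
      cdom C g = cdom C k \<and> ccomp C r1 g = ccomp C r1 k"
    then have gh: "hom C g (cdom C g) R" and kh: "hom C k (cdom C g) R"
      and r1gk: "ccomp C r1 g = ccomp C r1 k"
      using r1h unfolding hom_def by auto
    have r0g: "hom C (ccomp C r0 g) (cdom C g) (cdom C m)"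
      using hom_comp[OF cat gh r0h] mh unfolding hom_def by simp
    have r1g: "hom C (ccomp C r1 g) (cdom C g) (cdom C h)"
      using hom_comp[OF cat gh r1h] hh unfolding hom_def by simp
    have square_g: "ccomp C m (ccomp C r0 g) = ccomp C h (ccomp C r1 g)"
      unfolding comp_assoc[OF cat gh r0h mh] comp_assoc[OF cat gh r1h hh] sq ..
    have "ccomp C m (ccomp C r0 g) = ccomp C m (ccomp C r0 k)"
      unfolding comp_assoc[OF cat gh r0h mh] comp_assoc[OF cat kh r0h mh] sq
        comp_assoc[OF cat gh r1h hh, symmetric] comp_assoc[OF cat kh r1h hh, symmetric] r1gk ..
    then have r0gk: "ccomp C r0 g = ccomp C r0 k"
      by (rule mono_cancel[OF mono mh hom_comp[OF cat gh r0h] hom_comp[OF cat kh r0h]])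
    show "g = k"
      using pullback_pair_unique[OF pb r0g r1g square_g gh refl refl kh r0gk[symmetric] r1gk[symmetric]] .
  qed
qed

lemma jointly_extremally_epicD:
  "jointly_extremally_epic C u v \<Longrightarrow> is_mono C m \<Longrightarrow> hom C m M T \<Longrightarrow>
   hom C u A T \<Longrightarrow> hom C v B T \<Longrightarrow> hom C a A M \<Longrightarrow> hom C b B M \<Longrightarrow>
   ccomp C m a = u \<Longrightarrow> ccomp C m b = v \<Longrightarrow> is_iso C m"
  unfolding jointly_extremally_epic_def hom_def
  by (elim conjE allE[of _ m] allE[of _ a] allE[of _ b] impE) auto

lemma is_iso_section:
  "is_iso C f \<Longrightarrow> hom C f X Y \<Longrightarrow> \<exists>g. hom C g Y X \<and> ccomp C f g = cid C Y"
  unfolding is_iso_def hom_def by (elim conjE exE) auto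

text \<open>The pullback of \<open>m\<close> along \<open>h\<close> is a monomorphism through which both \<open>u\<close> and \<open>v\<close>
factor, hence an isomorphism.\<close>

lemma factor_through_mono_if_jointly_extremally_epic:
  assumes fc: "finitely_complete C" and jee: "jointly_extremally_epic C u v"
    and mono: "is_mono C m" and mh: "hom C m S P" and hh: "hom C h T P"
    and uh: "hom C u A T" and vh: "hom C v B T" and ah: "hom C a A S" and bh: "hom C b B S"
    and hu: "ccomp C h u = ccomp C m a" and hv: "ccomp C h v = ccomp C m b"
  obtains t where "hom C t T S" and "ccomp C m t = h"
proof -
  have cat: "is_category C" using fc unfolding finitely_complete_def by blast
  obtain R r0 r1 where pb: "is_pullback C m h R r0 r1"
    using pullback_exists[OF fc mh hh] by blast
  have r0h: "hom C r0 R S" and r1h: "hom C r1 R T" and sq: "ccomp C m r0 = ccomp C h r1"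
    using pullback_square[OF pb] mh hh unfolding hom_def by auto
  obtain a' where a'h: "hom C a' A R" and r1a': "ccomp C r1 a' = u"
    using pullback_pair_exists[OF pb, of a A u] ah uh mh hh hu unfolding hom_def by auto
  obtain b' where b'h: "hom C b' B R" and r1b': "ccomp C r1 b' = v"
    using pullback_pair_exists[OF pb, of b B v] bh vh mh hh hv unfolding hom_def by auto
  have iso: "is_iso C r1"
    using jointly_extremally_epicD[OF jee is_mono_pullback[OF cat mono mh hh pb] r1h uh vh
        a'h b'h r1a' r1b'] .
  obtain k where kh: "hom C k T R" and r1k: "ccomp C r1 k = cid C T"
    using is_iso_section[OF iso r1h] by blast
  have "ccomp C m (ccomp C r0 k) = ccomp C h (ccomp C r1 k)"
    unfolding comp_assoc[OF cat kh r0h mh] comp_assoc[OF cat kh r1h hh] sq ..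
  also have "\<dots> = h" unfolding r1k comp_id_right[OF cat hh] ..
  finally show ?thesis using that hom_comp[OF cat kh r0h] by blast
qed

lemma reflexive_relation_pullback_sections:
  assumes cat: "is_category C" and refl: "reflexive_relation C X S d0 d1 s0"
    and pb: "is_pullback C d1 d0 T q0 q1"
  obtains u v where "hom C u S T" "ccomp C q0 u = cid C S" "ccomp C q1 u = ccomp C s0 d1"
    and "hom C v S T" "ccomp C q0 v = ccomp C s0 d0" "ccomp C q1 v = cid C S"
proof -
  have s0h: "hom C s0 X S" and d0s0: "ccomp C d0 s0 = cid C X" and d1s0: "ccomp C d1 s0 = cid C X"
    and d0h: "hom C d0 S X" and d1h: "hom C d1 S X"
    using refl unfolding reflexive_relation_def is_relation_def by auto
  have idS: "hom C (cid C S) S S" using hom_id[OF cat] hom_objects[OF cat d0h] by blast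
  have "ccomp C d1 (cid C S) = ccomp C d0 (ccomp C s0 d1)"
    unfolding comp_assoc[OF cat d1h s0h d0h] d0s0 comp_id_left[OF cat d1h] comp_id_right[OF cat d1h] ..
  then obtain u where "hom C u S T" "ccomp C q0 u = cid C S" "ccomp C q1 u = ccomp C s0 d1"
    using pullback_pair_exists[OF pb, of "cid C S" S "ccomp C s0 d1"]
      idS hom_comp[OF cat d1h s0h] d0h d1h unfolding hom_def by auto
  moreover have "ccomp C d1 (ccomp C s0 d0) = ccomp C d0 (cid C S)"
    unfolding comp_assoc[OF cat d0h s0h d1h] d1s0 comp_id_left[OF cat d0h] comp_id_right[OF cat d0h] ..
  then obtain v where "hom C v S T" "ccomp C q0 v = ccomp C s0 d0" "ccomp C q1 v = cid C S"
    using pullback_pair_exists[OF pb, of "ccomp C s0 d0" S "cid C S"]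
      idS hom_comp[OF cat d0h s0h] d0h d1h unfolding hom_def by auto
  ultimately show ?thesis using that by blast
qed

text \<open>The \<open>\<Sigma>\<close>-Mal'tsev condition instantiated at \<open>(f, s) = (d\<^sub>0, s\<^sub>0)\<close> and
\<open>(g, t) = (d\<^sub>1, s\<^sub>0)\<close>: the pullback of \<open>d\<^sub>0\<close> along \<open>d\<^sub>1\<close> is the object of composable pairs.\<close>

lemma sigma_relation_sections_jointly_extremally_epic:
  assumes mal: "sigma_maltsev C \<Sigma>" and sr: "sigma_relation C \<Sigma> X S d0 d1 s0"
    and pb: "is_pullback C d1 d0 T q0 q1"
    and uh: "hom C u S T" and q0u: "ccomp C q0 u = cid C S" and q1u: "ccomp C q1 u = ccomp C s0 d1"
    and vh: "hom C v S T" and q0v: "ccomp C q0 v = ccomp C s0 d0" and q1v: "ccomp C q1 v = cid C S"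
  shows "jointly_extremally_epic C u v"
proof -
  have d0h: "hom C d0 S X" and d1h: "hom C d1 S X" and s0h: "hom C s0 X S"
    and d1s0: "ccomp C d1 s0 = cid C X" and inS: "(d0, s0) \<in> \<Sigma>"
    using sr unfolding sigma_relation_def reflexive_relation_def is_relation_def by auto
  have "split_epi C d1 s0" using d1h s0h d1s0 unfolding split_epi_def hom_def by auto
  then show ?thesis
    using mal[unfolded sigma_maltsev_def, rule_format, of d0 s0 d1 s0 T q1 q0 u v]
      inS is_pullback_sym[OF pb] uh vh q0u q1u q0v q1v d0h d1h unfolding hom_def by auto
qed

lemma relation_pairing_on_sections:
  assumes cat: "is_category C" and refl: "reflexive_relation C X S d0 d1 s0"
    and prod: "is_product C X X P p1 p2" and mh: "hom C m S P"
    and p1m: "ccomp C p1 m = d0" and p2m: "ccomp C p2 m = d1"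
    and pb: "is_pullback C d1 d0 T q0 q1"
    and hh: "hom C h T P" and p1h': "ccomp C p1 h = ccomp C d0 q0"
    and p2h': "ccomp C p2 h = ccomp C d1 q1"
    and uh: "hom C u S T" and q0u: "ccomp C q0 u = cid C S" and q1u: "ccomp C q1 u = ccomp C s0 d1"
    and vh: "hom C v S T" and q0v: "ccomp C q0 v = ccomp C s0 d0" and q1v: "ccomp C q1 v = cid C S"
  shows "ccomp C h u = m" and "ccomp C h v = m"
proof -
  have s0h: "hom C s0 X S" and d0s0: "ccomp C d0 s0 = cid C X" and d1s0: "ccomp C d1 s0 = cid C X"
    and d0h: "hom C d0 S X" and d1h: "hom C d1 S X"
    using refl unfolding reflexive_relation_def is_relation_def by auto
  have p1h: "hom C p1 P X" and p2h: "hom C p2 P X" using prod unfolding is_product_def by auto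
  have q0h: "hom C q0 T S" and q1h: "hom C q1 T S"
    using pullback_square[OF pb] d0h d1h unfolding hom_def by auto
  have "ccomp C p1 (ccomp C h u) = d0"
    unfolding comp_assoc[OF cat uh hh p1h] p1h' comp_assoc[OF cat uh q0h d0h, symmetric] q0u
    using comp_id_right[OF cat d0h] .
  moreover have "ccomp C p2 (ccomp C h u) = d1"
    unfolding comp_assoc[OF cat uh hh p2h] p2h' comp_assoc[OF cat uh q1h d1h, symmetric] q1u
      comp_assoc[OF cat d1h s0h d1h] d1s0
    using comp_id_left[OF cat d1h] .
  ultimately show "ccomp C h u = m"
    using product_pair_unique[OF prod d0h d1h hom_comp[OF cat uh hh] _ _ mh p1m p2m] by blast
  have "ccomp C p1 (ccomp C h v) = d0"
    unfolding comp_assoc[OF cat vh hh p1h] p1h' comp_assoc[OF cat vh q0h d0h, symmetric] q0v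
      comp_assoc[OF cat d0h s0h d0h] d0s0
    using comp_id_left[OF cat d0h] .
  moreover have "ccomp C p2 (ccomp C h v) = d1"
    unfolding comp_assoc[OF cat vh hh p2h] p2h' comp_assoc[OF cat vh q1h d1h, symmetric] q1v
    using comp_id_right[OF cat d1h] .
  ultimately show "ccomp C h v = m"
    using product_pair_unique[OF prod d0h d1h hom_comp[OF cat vh hh] _ _ mh p1m p2m] by blast
qed

lemma sigma_relation_transitive:
  assumes fc: "finitely_complete C" and mal: "sigma_maltsev C \<Sigma>"
    and sr: "sigma_relation C \<Sigma> X S d0 d1 s0"
  shows "transitive_relation C X S d0 d1"
  unfolding transitive_relation_def
proof (intro conjI allI impI)
  have cat: "is_category C" using fc unfolding finitely_complete_def by blast
  show rel: "is_relation C X S d0 d1"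
    using sr unfolding sigma_relation_def reflexive_relation_def by simp
  have refl: "reflexive_relation C X S d0 d1 s0" using sr unfolding sigma_relation_def by simp
  have d0h: "hom C d0 S X" and d1h: "hom C d1 S X" using rel unfolding is_relation_def by auto
  obtain P p1 p2 m where prod: "is_product C X X P p1 p2" and mono: "is_mono C m"
    and mh: "hom C m S P" and p1m: "ccomp C p1 m = d0" and p2m: "ccomp C p2 m = d1"
    using rel unfolding is_relation_def by blast
  have p1h: "hom C p1 P X" and p2h: "hom C p2 P X" using prod unfolding is_product_def by auto
  have idS: "hom C (cid C S) S S" using hom_id[OF cat] hom_objects[OF cat d0h] by blast
  fix T q0 q1
  assume pb: "is_pullback C d1 d0 T q0 q1"
  have q0h: "hom C q0 T S" and q1h: "hom C q1 T S"
    using pullback_square[OF pb] d0h d1h unfolding hom_def by auto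
  obtain u v where uh: "hom C u S T" and q0u: "ccomp C q0 u = cid C S"
    and q1u: "ccomp C q1 u = ccomp C s0 d1" and vh: "hom C v S T"
    and q0v: "ccomp C q0 v = ccomp C s0 d0" and q1v: "ccomp C q1 v = cid C S"
    using reflexive_relation_pullback_sections[OF cat refl pb] .
  have jee: "jointly_extremally_epic C u v"
    using sigma_relation_sections_jointly_extremally_epic[OF mal sr pb uh q0u q1u vh q0v q1v] .
  obtain h where hh: "hom C h T P" and p1h': "ccomp C p1 h = ccomp C d0 q0"
    and p2h': "ccomp C p2 h = ccomp C d1 q1"
    using product_pair_exists[OF prod hom_comp[OF cat q0h d0h] hom_comp[OF cat q1h d1h]] by blast
  have hu: "ccomp C h u = ccomp C m (cid C S)" and hv: "ccomp C h v = ccomp C m (cid C S)"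
    using relation_pairing_on_sections[OF cat refl prod mh p1m p2m pb hh p1h' p2h'
        uh q0u q1u vh q0v q1v] comp_id_right[OF cat mh] by simp_all
  obtain t where th: "hom C t T S" and mt: "ccomp C m t = h"
    using factor_through_mono_if_jointly_extremally_epic[OF fc jee mono mh hh uh vh idS idS hu hv] .
  have "ccomp C d0 t = ccomp C d0 q0" "ccomp C d1 t = ccomp C d1 q1"
    unfolding p1m[symmetric] p2m[symmetric] comp_assoc[OF cat th mh p1h, symmetric]
      comp_assoc[OF cat th mh p2h, symmetric] mt p1h' p2h' by simp_all
  then show "\<exists>t. hom C t T S \<and> ccomp C d0 t = ccomp C d0 q0 \<and> ccomp C d1 t = ccomp C d1 q1"
    using th by blast
qed

theorem proposition2p2:
  fixes C :: "('o, 'a) category" and \<Sigma> :: "('a \<times> 'a) set"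
  assumes "finitely_complete C" and "fibrational C \<Sigma>" and "sigma_maltsev C \<Sigma>"
  shows "(\<forall>X S d0 d1 s0. sigma_relation C \<Sigma> X S d0 d1 s0 \<longrightarrow> transitive_relation C X S d0 d1) \<and>
         (\<forall>X S d0 d1 s0. sigma_relation C \<Sigma> X S d0 d1 s0 \<and> symmetric_relation C X S d0 d1 \<longrightarrow>
            equivalence_relation C X S d0 d1)"
  using sigma_relation_transitive[OF assms(1) assms(3)]
  unfolding equivalence_relation_def sigma_relation_def by blast

end
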